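(* Let $X$ be a finite set, $\tau:\mathbb F_X\times\mathbb F_X\to\mathbb F_X$, $\tau(\omega_1,\omega_2)=\omega_1^{-1}\omega_2$. For any $S\subset\mathbb F_X$ and any $T\subset\mathbb F_X^2$: (1) $S$ is negligible if and only if $\tau^{-1}(S)$ is negligible, and $S$ is exponentially negligible if and only if $\tau^{-1}(S)$ is exponentially negligible; (2) $S$ is generic if and only if $\tau^{-1}(S)$ is generic, and $S$ is exponentially generic if and only if $\tau^{-1}(S)$ is exponentially generic; (3) if $T$ is generic (resp. exponentially generic) then $\tau(T)$ is generic (resp. exponentially generic); (4) if $\tau(T)$ is negligible (resp. exponentially negligible) then $T$ is negligible (resp. exponentially negligible).
   Context: $\mathbb F_X$ is the free group on $X$ with reduced word length $|\cdot|$; on $\mathbb F_X^k$ use the length $|(\omega_1,\dots,\omega_k)|=|\omega_1|+\dots+|\omega_k|$ and let $B_n(\mathbb F_X^k)$ be the ball of radius $n$ about the identity. $S\subset\mathbb F_X^k$ is negligible if $|S\cap B_n(\mathbb F_X^k)|/|B_n(\mathbb F_X^k)|\to0$, exponentially negligible if moreover $\beta^n|S\cap B_n(\mathbb F_X^k)|/|B_n(\mathbb F_X^k)|\to0$ for some $\beta>1$; $S$ is (exponentially) generic if its complement is (exponentially) negligible. *)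

theory Defs
  imports Complex_Main
begin

text \<open>Free group on a set X: elements are reduced words over the letters
  (x, True) (standing for x) and (x, False) (standing for x inverse), x in X.\<close>

type_synonym 'a letter = "'a \<times> bool"
type_synonym 'a word = "'a letter list"

definition inv_letter :: "'a letter \<Rightarrow> 'a letter" where
  "inv_letter l = (fst l, \<not> snd l)"

fun reduced :: "'a word \<Rightarrow> bool" where
  "reduced [] = True"
| "reduced [l] = True"
| "reduced (l # m # w) = (m \<noteq> inv_letter l \<and> reduced (m # w))"

definition free_group_elems :: "'a set \<Rightarrow> 'a word set" where
  "free_group_elems X = {w. set w \<subseteq> X \<times> UNIV \<and> reduced w}"

fun push :: "'a letter \<Rightarrow> 'a word \<Rightarrow> 'a word" where
  "push l [] = [l]"
| "push l (m # w) = (if m = inv_letter l then w else l # m # w)"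

definition fg_mult :: "'a word \<Rightarrow> 'a word \<Rightarrow> 'a word" where
  "fg_mult u v = foldr push u v"

definition fg_inv :: "'a word \<Rightarrow> 'a word" where
  "fg_inv w = rev (map inv_letter w)"

definition tau :: "'a word \<times> 'a word \<Rightarrow> 'a word" where
  "tau p = fg_mult (fg_inv (fst p)) (snd p)"

definition ball1 :: "'a set \<Rightarrow> nat \<Rightarrow> 'a word set" where
  "ball1 X n = {w \<in> free_group_elems X. length w \<le> n}"

definition ball2 :: "'a set \<Rightarrow> nat \<Rightarrow> ('a word \<times> 'a word) set" where
  "ball2 X n = {p \<in> free_group_elems X \<times> free_group_elems X. length (fst p) + length (snd p) \<le> n}"

definition negligible :: "(nat \<Rightarrow> 'b set) \<Rightarrow> 'b set \<Rightarrow> bool" where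
  "negligible B S \<longleftrightarrow>
     (\<lambda>n. real (card (S \<inter> B n)) / real (card (B n))) \<longlonglongrightarrow> 0"

definition exp_negligible :: "(nat \<Rightarrow> 'b set) \<Rightarrow> 'b set \<Rightarrow> bool" where
  "exp_negligible B S \<longleftrightarrow>
     (\<exists>\<beta>::real. \<beta> > 1 \<and>
        (\<lambda>n. \<beta> ^ n * real (card (S \<inter> B n)) / real (card (B n))) \<longlonglongrightarrow> 0)"

definition generic :: "'b set \<Rightarrow> (nat \<Rightarrow> 'b set) \<Rightarrow> 'b set \<Rightarrow> bool" where
  "generic G B S \<longleftrightarrow> negligible B (G - S)"

definition exp_generic :: "'b set \<Rightarrow> (nat \<Rightarrow> 'b set) \<Rightarrow> 'b set \<Rightarrow> bool" where
  "exp_generic G B S \<longleftrightarrow> exp_negligible B (G - S)"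

end

theory Submission
  imports Defs "HOL-Library.Sublist" "HOL-Analysis.Uniform_Limit"
begin

(* A pair (u, v) in the ball of radius n of F_X^2 with u^-1 v = s is determined by the longest
   common prefix q of u and v, of length at most (n - |s|)/2, and by the point where s splits into
   the inverted remainder of u followed by the remainder of v; conversely the splittings of s and the
   cancelling pairs (l^i, l^i s) show that this fibre of tau has at least (n + 1)/2 elements.
   Summing over s, the density of tau^-1(S) in the ball of F_X^2 is bounded below by a constant times
   the density d_n of S in the ball of F_X, and above by a constant times the convolution
   sum_{j <= n} rho^(n - j) d_j with rho = (2|X| - 1)^(-1/2) (rho = 0 if |X| = 1).  By Tannery's
   theorem such a convolution tends to 0, exponentially fast if d_n does.  The statements on
   genericity and on tau(T) follow since tau^-1 commutes with complements and T is contained in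
   tau^-1(tau(T)). *)

section \<open>Reduced words and the map tau\<close>

lemma inv_letter_inv_letter [simp]: "inv_letter (inv_letter l) = l"
  by (simp add: inv_letter_def)

lemma inv_letter_neq [simp]: "inv_letter l \<noteq> l" "l \<noteq> inv_letter l"
  by (auto simp: inv_letter_def prod_eq_iff)

lemma inv_letter_eq_iff: "inv_letter a = b \<longleftrightarrow> a = inv_letter b"
  by (auto simp: inv_letter_def prod_eq_iff)

lemma inv_letter_in_letters: "l \<in> X \<times> UNIV \<Longrightarrow> inv_letter l \<in> X \<times> UNIV"
  by (auto simp: inv_letter_def)

lemma reduced_Cons: "reduced (l # w) \<longleftrightarrow> reduced w \<and> (w = [] \<or> hd w \<noteq> inv_letter l)"
  by (cases w) auto

lemma reduced_append:
  "reduced (u @ v) \<longleftrightarrow> reduced u \<and> reduced v \<and> (u = [] \<or> v = [] \<or> hd v \<noteq> inv_letter (last u))"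
  by (induction u) (auto simp: reduced_Cons)

lemma reduced_replicate: "reduced (replicate i l)"
  by (induction i) (auto simp: reduced_Cons)

lemma fg_inv_Nil [simp]: "fg_inv [] = []"
  by (simp add: fg_inv_def)

lemma fg_inv_eq_Nil_iff [simp]: "fg_inv w = [] \<longleftrightarrow> w = []"
  by (simp add: fg_inv_def)

lemma fg_inv_Cons: "fg_inv (l # w) = fg_inv w @ [inv_letter l]"
  by (simp add: fg_inv_def)

lemma fg_inv_append: "fg_inv (u @ v) = fg_inv v @ fg_inv u"
  by (simp add: fg_inv_def)

lemma fg_inv_fg_inv [simp]: "fg_inv (fg_inv w) = w"
  by (simp add: fg_inv_def rev_map comp_def)

lemma length_fg_inv [simp]: "length (fg_inv w) = length w"
  by (simp add: fg_inv_def)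

lemma last_fg_inv: "w \<noteq> [] \<Longrightarrow> last (fg_inv w) = inv_letter (hd w)"
  by (cases w) (auto simp: fg_inv_def)

lemma reduced_fg_inv [simp]: "reduced (fg_inv w) \<longleftrightarrow> reduced w"
proof (induction w)
  case (Cons l w)
  then show ?case
    by (cases "w = []") (auto simp: fg_inv_Cons reduced_append reduced_Cons last_fg_inv inv_letter_eq_iff)
qed simp

lemma set_fg_inv_subset_iff: "set (fg_inv w) \<subseteq> X \<times> UNIV \<longleftrightarrow> set w \<subseteq> X \<times> UNIV"
  by (auto simp: fg_inv_def inv_letter_def)

lemma fg_mult_append: "fg_mult (u @ v) w = fg_mult u (fg_mult v w)"
  by (simp add: fg_mult_def)

lemma fg_mult_fg_inv_cancel: "fg_mult (fg_inv q) (q @ w) = w"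
  by (induction q) (simp_all add: fg_inv_Cons fg_mult_append fg_mult_def)

lemma fg_mult_reduced_append: "reduced (u @ v) \<Longrightarrow> fg_mult u v = u @ v"
proof (induction u)
  case (Cons l u)
  then show ?case
    by (cases "u @ v") (auto simp: fg_mult_def reduced_Cons)
qed (simp add: fg_mult_def)

lemma reduced_push: "reduced v \<Longrightarrow> reduced (push l v)"
  by (cases v) (auto simp: reduced_Cons)

lemma push_push_inv_letter: "reduced v \<Longrightarrow> push l (push (inv_letter l) v) = v"
  by (cases v rule: reduced.cases) (auto simp: inv_letter_eq_iff)

lemma fg_mult_fg_mult_fg_inv: "reduced v \<Longrightarrow> fg_mult w (fg_mult (fg_inv w) v) = v"
proof (induction w arbitrary: v)
  case (Cons l w)
  have "fg_mult (l # w) (fg_mult (fg_inv (l # w)) v)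
      = push l (fg_mult w (fg_mult (fg_inv w) (push (inv_letter l) v)))"
    by (simp add: fg_inv_Cons fg_mult_append) (simp add: fg_mult_def)
  also have "\<dots> = v"
    using Cons by (simp add: reduced_push push_push_inv_letter)
  finally show ?case .
qed (simp add: fg_mult_def)

lemma fg_mult_tau: "reduced v \<Longrightarrow> fg_mult u (tau (u, v)) = v"
  by (simp add: tau_def fg_mult_fg_mult_fg_inv)

lemma longest_common_prefix_diverge:
  "u = longest_common_prefix u v @ u' \<Longrightarrow> v = longest_common_prefix u v @ v'
   \<Longrightarrow> u' = [] \<or> v' = [] \<or> hd u' \<noteq> hd v'"
proof (induction u v arbitrary: u' v' rule: longest_common_prefix.induct)
  case (1 x xs y ys)
  then show ?case by (cases "x = y") auto
qed auto

lemma tau_common_prefix: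
  assumes "reduced (q @ u')" "reduced (q @ v')" "u' = [] \<or> v' = [] \<or> hd u' \<noteq> hd v'"
  shows "tau (q @ u', q @ v') = fg_inv u' @ v'" and "reduced (fg_inv u' @ v')"
proof -
  show reduced: "reduced (fg_inv u' @ v')"
    using assms by (auto simp: reduced_append last_fg_inv)
  have "tau (q @ u', q @ v') = fg_mult (fg_inv u') (fg_mult (fg_inv q) (q @ v'))"
    by (simp add: tau_def fg_inv_append fg_mult_append)
  also have "\<dots> = fg_inv u' @ v'"
    using reduced by (simp add: fg_mult_fg_inv_cancel fg_mult_reduced_append)
  finally show "tau (q @ u', q @ v') = fg_inv u' @ v'" .
qed

lemma tau_longest_common_prefix:
  assumes "reduced u" "reduced v"
  obtains u' v' where "u = longest_common_prefix u v @ u'" "v = longest_common_prefix u v @ v'"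
    "tau (u, v) = fg_inv u' @ v'" "reduced (fg_inv u' @ v')"
proof -
  let ?q = "longest_common_prefix u v"
  obtain u' v' where u: "u = ?q @ u'" and v: "v = ?q @ v'"
    using longest_common_prefix_prefix1 longest_common_prefix_prefix2 by (metis prefixE)
  have "reduced (?q @ u')" "reduced (?q @ v')"
    using assms by (simp_all only: u[symmetric] v[symmetric])
  note tau = tau_common_prefix[OF this longest_common_prefix_diverge[OF u v]]
  show ?thesis
    using that[OF u v] tau by (simp only: u[symmetric] v[symmetric])
qed

lemma tau_in_free_group:
  assumes "u \<in> free_group_elems X" "v \<in> free_group_elems X"
  shows "tau (u, v) \<in> free_group_elems X" and "length (tau (u, v)) \<le> length u + length v"
proof -
  have "reduced u" "reduced v"
    using assms by (simp_all add: free_group_elems_def)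
  then obtain u' v' where u: "u = longest_common_prefix u v @ u'" and v: "v = longest_common_prefix u v @ v'"
    and tau: "tau (u, v) = fg_inv u' @ v'" "reduced (fg_inv u' @ v')"
    by (rule tau_longest_common_prefix)
  show "length (tau (u, v)) \<le> length u + length v"
    using arg_cong[OF u, of length] arg_cong[OF v, of length] tau(1) by simp
  have "set u' \<subseteq> X \<times> UNIV" "set v' \<subseteq> X \<times> UNIV"
    using assms arg_cong[OF u, of set] arg_cong[OF v, of set] by (auto simp: free_group_elems_def)
  then show "tau (u, v) \<in> free_group_elems X"
    using tau by (simp add: free_group_elems_def set_fg_inv_subset_iff)
qed

section \<open>Balls in the free group\<close>

lemma finite_ball1: "finite X \<Longrightarrow> finite (ball1 X n)"
proof -
  assume "finite X"
  have "ball1 X n \<subseteq> {w. set w \<subseteq> X \<times> UNIV \<and> length w \<le> n}"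
    by (auto simp: ball1_def free_group_elems_def)
  moreover have "finite {w. set w \<subseteq> X \<times> (UNIV :: bool set) \<and> length w \<le> n}"
    using \<open>finite X\<close> by (intro finite_lists_length_le) auto
  ultimately show ?thesis
    by (rule finite_subset)
qed

lemma finite_ball2: "finite X \<Longrightarrow> finite (ball2 X n)"
proof -
  assume "finite X"
  have "ball2 X n \<subseteq> ball1 X n \<times> ball1 X n"
    by (auto simp: ball1_def ball2_def)
  then show ?thesis
    using finite_ball1[OF \<open>finite X\<close>] by (blast intro: finite_subset)
qed

lemma ball1_0: "ball1 X 0 = {[]}"
  by (auto simp: ball1_def free_group_elems_def)

lemma card_ball1_pos: "finite X \<Longrightarrow> 0 < card (ball1 X n)"
proof -
  assume "finite X"
  moreover have "[] \<in> ball1 X n"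
    by (simp add: ball1_def free_group_elems_def)
  ultimately show ?thesis
    using finite_ball1 card_gt_0_iff by blast
qed

definition words_starting_with :: "'a set \<Rightarrow> 'a letter \<Rightarrow> nat \<Rightarrow> 'a word set" where
  "words_starting_with X l j = {w \<in> free_group_elems X. length w = Suc j \<and> hd w = l}"

lemma finite_words_starting_with: "finite X \<Longrightarrow> finite (words_starting_with X l j)"
proof -
  assume "finite X"
  have "words_starting_with X l j \<subseteq> ball1 X (Suc j)"
    by (auto simp: words_starting_with_def ball1_def)
  then show ?thesis
    using finite_ball1[OF \<open>finite X\<close>] by (rule finite_subset)
qed

lemma words_starting_with_disjoint:
  "l \<noteq> l' \<Longrightarrow> words_starting_with X l j \<inter> words_starting_with X l' j = {}"
  by (auto simp: words_starting_with_def)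

lemma words_starting_with_0: "l \<in> X \<times> UNIV \<Longrightarrow> words_starting_with X l 0 = {[l]}"
  by (auto simp: words_starting_with_def free_group_elems_def length_Suc_conv)

lemma words_starting_with_Suc:
  assumes "l \<in> X \<times> UNIV"
  shows "words_starting_with X l (Suc j)
    = (#) l ` (\<Union>l'\<in>X \<times> UNIV - {inv_letter l}. words_starting_with X l' j)"
proof (intro equalityI subsetI)
  fix w
  assume "w \<in> words_starting_with X l (Suc j)"
  then obtain w' where w: "w = l # w'" "length w' = Suc j" "reduced w'" "set w' \<subseteq> X \<times> UNIV"
    "hd w' \<noteq> inv_letter l"
    by (auto simp: words_starting_with_def free_group_elems_def length_Suc_conv reduced_Cons)
  then have "hd w' \<in> X \<times> UNIV"
    by (cases w') auto
  with w show "w \<in> (#) l ` (\<Union>l'\<in>X \<times> UNIV - {inv_letter l}. words_starting_with X l' j)"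
    by (auto simp: words_starting_with_def free_group_elems_def)
next
  fix w
  assume "w \<in> (#) l ` (\<Union>l'\<in>X \<times> UNIV - {inv_letter l}. words_starting_with X l' j)"
  with assms show "w \<in> words_starting_with X l (Suc j)"
    by (auto simp: words_starting_with_def free_group_elems_def reduced_Cons)
qed

lemma card_words_starting_with:
  assumes "finite X" "l \<in> X \<times> UNIV"
  shows "card (words_starting_with X l j) = (2 * card X - 1) ^ j"
  using assms(2)
proof (induction j arbitrary: l)
  case 0
  then show ?case
    by (simp add: words_starting_with_0)
next
  case (Suc j)
  have "card (words_starting_with X l (Suc j))
      = card (\<Union>l'\<in>X \<times> UNIV - {inv_letter l}. words_starting_with X l' j)"
    by (simp add: words_starting_with_Suc[OF Suc.prems] card_image)
  also have "\<dots> = (\<Sum>l'\<in>X \<times> UNIV - {inv_letter l}. card (words_starting_with X l' j))"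
    using assms(1) by (intro card_UN_disjoint)
      (auto simp: finite_words_starting_with words_starting_with_disjoint)
  also have "\<dots> = (\<Sum>l'\<in>X \<times> UNIV - {inv_letter l}. (2 * card X - 1) ^ j)"
    by (rule sum.cong) (auto simp: Suc.IH)
  also have "\<dots> = (2 * card X - 1) ^ Suc j"
    using assms(1) inv_letter_in_letters[OF Suc.prems]
    by (simp add: card_cartesian_product card_Diff_singleton mult.commute)
  finally show ?case .
qed

lemma ball1_Suc: "ball1 X (Suc n) = ball1 X n \<union> (\<Union>l\<in>X \<times> UNIV. words_starting_with X l n)"
proof (intro equalityI subsetI)
  fix w
  assume "w \<in> ball1 X (Suc n)"
  then show "w \<in> ball1 X n \<union> (\<Union>l\<in>X \<times> UNIV. words_starting_with X l n)"
    by (cases w) (auto simp: ball1_def words_starting_with_def free_group_elems_def)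
qed (auto simp: ball1_def words_starting_with_def)

lemma card_ball1_Suc:
  assumes "finite X"
  shows "card (ball1 X (Suc n)) = card (ball1 X n) + 2 * card X * (2 * card X - 1) ^ n"
proof -
  have "ball1 X n \<inter> (\<Union>l\<in>X \<times> UNIV. words_starting_with X l n) = {}"
    by (auto simp: ball1_def words_starting_with_def)
  then have "card (ball1 X (Suc n))
      = card (ball1 X n) + card (\<Union>l\<in>X \<times> UNIV. words_starting_with X l n)"
    unfolding ball1_Suc using assms
    by (intro card_Un_disjoint) (simp_all add: finite_ball1 finite_words_starting_with)
  also have "card (\<Union>l\<in>X \<times> UNIV. words_starting_with X l n)
      = (\<Sum>l\<in>X \<times> (UNIV :: bool set). (2 * card X - 1) ^ n)"
    using assms by (subst card_UN_disjoint)
      (auto simp: finite_words_starting_with card_words_starting_with words_starting_with_disjoint)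
  also have "\<dots> = 2 * card X * (2 * card X - 1) ^ n"
    using assms by (simp add: card_cartesian_product)
  finally show ?thesis .
qed

lemma card_ball1_ge:
  assumes "finite X"
  shows "(2 * card X - 1) ^ n \<le> card (ball1 X n)"
proof (cases n)
  case (Suc m)
  have "(2 * card X - 1) ^ n \<le> 2 * card X * (2 * card X - 1) ^ m"
    by (simp add: Suc)
  also have "\<dots> \<le> card (ball1 X n)"
    by (simp add: Suc card_ball1_Suc assms)
  finally show ?thesis .
qed (simp add: ball1_0)

lemma card_ball1_card_eq_1: "finite X \<Longrightarrow> card X = 1 \<Longrightarrow> card (ball1 X n) = 2 * n + 1"
  by (induction n) (simp_all add: ball1_0 card_ball1_Suc)

lemma card_ball1_le:
  assumes "finite X" "2 \<le> card X"
  shows "card (ball1 X n) \<le> 3 * (2 * card X - 1) ^ n"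
proof (induction n)
  case 0
  then show ?case
    by (simp add: ball1_0)
next
  case (Suc n)
  have "card (ball1 X (Suc n)) \<le> (3 + 2 * card X) * (2 * card X - 1) ^ n"
    using Suc by (simp add: card_ball1_Suc assms algebra_simps)
  also have "\<dots> \<le> 3 * (2 * card X - 1) * (2 * card X - 1) ^ n"
    using assms(2) by (intro mult_right_mono) auto
  finally show ?case
    by simp
qed

section \<open>Fibres of tau\<close>

definition tau_fibre :: "'a set \<Rightarrow> nat \<Rightarrow> 'a word \<Rightarrow> ('a word \<times> 'a word) set" where
  "tau_fibre X n s = {p \<in> ball2 X n. tau p = s}"

definition tau_preimage :: "'a set \<Rightarrow> 'a word set \<Rightarrow> ('a word \<times> 'a word) set" where
  "tau_preimage X S = {p \<in> free_group_elems X \<times> free_group_elems X. tau p \<in> S}"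

lemma tau_preimage_free_group:
  "tau_preimage X (free_group_elems X) = free_group_elems X \<times> free_group_elems X"
  using tau_in_free_group by (auto simp: tau_preimage_def)

lemma tau_mem_ball1: "p \<in> ball2 X n \<Longrightarrow> tau p \<in> ball1 X n"
  using tau_in_free_group[of "fst p" X "snd p"] by (fastforce simp: ball1_def ball2_def)

lemma finite_tau_fibre: "finite X \<Longrightarrow> finite (tau_fibre X n s)"
  by (rule finite_subset[OF _ finite_ball2]) (auto simp: tau_fibre_def)

lemma card_tau_preimage_inter_ball2:
  assumes "finite X"
  shows "card (tau_preimage X S \<inter> ball2 X n) = (\<Sum>s\<in>S \<inter> ball1 X n. card (tau_fibre X n s))"
proof -
  have "tau_preimage X S \<inter> ball2 X n = (\<Union>s\<in>S \<inter> ball1 X n. tau_fibre X n s)"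
    using tau_mem_ball1 by (auto simp: tau_preimage_def tau_fibre_def) (auto simp: ball2_def)
  then show ?thesis
    using finite_ball1[OF assms] finite_tau_fibre[OF assms]
    by (simp add: card_UN_disjoint tau_fibre_def disjoint_iff)
qed

lemma card_tau_fibre_ge:
  assumes "finite X" "X \<noteq> {}" and s: "s \<in> ball1 X n"
  shows "(n - length s) div 2 + length s + 1 \<le> card (tau_fibre X n s)"
proof -
  let ?j = "length s" and ?r = "(n - length s) div 2"
  have red: "reduced s" "set s \<subseteq> X \<times> UNIV" "?j \<le> n"
    using s by (auto simp: ball1_def free_group_elems_def)
  obtain l where l: "l \<in> X \<times> UNIV" "s \<noteq> [] \<Longrightarrow> hd s = l"
    using assms(2) red(2) by (cases s) auto
  define pair where "pair k = (if k \<le> ?j then (fg_inv (take (?j - k) s), drop (?j - k) s)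
    else (replicate (k - ?j) l, replicate (k - ?j) l @ s))" for k
  have "pair k \<in> tau_fibre X n s" if "k \<le> ?j + ?r" for k
  proof (cases "k \<le> ?j")
    case True
    have "reduced (take (?j - k) s)" "reduced (drop (?j - k) s)"
      using red(1) reduced_append[of "take (?j - k) s" "drop (?j - k) s"] by simp_all
    moreover have "set (take (?j - k) s) \<subseteq> X \<times> UNIV" "set (drop (?j - k) s) \<subseteq> X \<times> UNIV"
      using red(2) set_take_subset set_drop_subset by fastforce+
    moreover have "tau (pair k) = s"
      using red(1) True by (simp add: pair_def tau_def fg_mult_reduced_append)
    ultimately show ?thesis
      using True red(3)
      by (auto simp: pair_def tau_fibre_def ball2_def free_group_elems_def set_fg_inv_subset_iff)
  next
    case False
    have "reduced (replicate (k - ?j) l @ s)"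
      using red(1) l(2) by (auto simp: reduced_append reduced_replicate)
    moreover have "tau (pair k) = s"
      using False by (simp add: pair_def tau_def fg_mult_fg_inv_cancel)
    ultimately show ?thesis
      using False that red l(1)
      by (auto simp: pair_def tau_fibre_def ball2_def free_group_elems_def reduced_replicate)
  qed
  moreover have "inj_on pair {..?j + ?r}"
    by (rule inj_on_inverseI[where g = "\<lambda>p. length (snd p)"]) (simp add: pair_def)
  ultimately have "card {..?j + ?r} \<le> card (tau_fibre X n s)"
    using finite_tau_fibre[OF assms(1)] by (intro card_inj_on_le) auto
  then show ?thesis
    by simp
qed

lemma card_tau_fibre_le_card_ball1:
  assumes "finite X"
  shows "card (tau_fibre X n s) \<le> card (ball1 X n)"
proof -
  have "inj_on fst (tau_fibre X n s)"
    by (rule inj_on_inverseI[where g = "\<lambda>u. (u, fg_mult u s)"])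
      (auto simp: tau_fibre_def ball2_def free_group_elems_def fg_mult_tau)
  moreover have "fst ` tau_fibre X n s \<subseteq> ball1 X n"
    by (auto simp: tau_fibre_def ball2_def ball1_def)
  ultimately show ?thesis
    using finite_ball1[OF assms] by (rule card_inj_on_le)
qed

lemma tau_fibre_decompose:
  assumes "(u, v) \<in> tau_fibre X n s"
  obtains q c where "q \<in> ball1 X ((n - length s) div 2)" "c \<le> length s"
    "u = q @ fg_inv (take c s)" "v = q @ drop c s"
proof -
  let ?q = "longest_common_prefix u v"
  have fibre: "reduced u" "reduced v" "set u \<subseteq> X \<times> UNIV" "length u + length v \<le> n" "tau (u, v) = s"
    using assms by (auto simp: tau_fibre_def ball2_def free_group_elems_def)
  obtain u' v' where u: "u = ?q @ u'" and v: "v = ?q @ v'"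
    and "tau (u, v) = fg_inv u' @ v'" "reduced (fg_inv u' @ v')"
    using fibre(1,2) by (rule tau_longest_common_prefix)
  then have s: "s = fg_inv u' @ v'"
    using fibre(5) by simp
  have split: "fg_inv (take (length u') s) = u'" "drop (length u') s = v'"
    by (simp_all add: s)
  show ?thesis
  proof (rule that)
    have "length ?q \<le> (n - length s) div 2"
      using fibre(4) arg_cong[OF u, of length] arg_cong[OF v, of length] by (simp add: s)
    moreover have "reduced ?q" "set ?q \<subseteq> X \<times> UNIV"
      using fibre(1,3) arg_cong[OF u, of reduced] arg_cong[OF u, of set] by (simp_all add: reduced_append)
    ultimately show "?q \<in> ball1 X ((n - length s) div 2)"
      by (simp add: ball1_def free_group_elems_def)
    show "length u' \<le> length s"
      by (simp add: s)
    show "u = ?q @ fg_inv (take (length u') s)" "v = ?q @ drop (length u') s"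
      unfolding split by (fact u, fact v)
  qed
qed

lemma card_tau_fibre_le:
  assumes "finite X"
  shows "card (tau_fibre X n s) \<le> (length s + 1) * card (ball1 X ((n - length s) div 2))"
proof -
  let ?r = "(n - length s) div 2"
  have "tau_fibre X n s \<subseteq> (\<lambda>(q, c). (q @ fg_inv (take c s), q @ drop c s)) ` (ball1 X ?r \<times> {..length s})"
  proof clarify
    fix u v
    assume "(u, v) \<in> tau_fibre X n s"
    then obtain q c where "q \<in> ball1 X ?r" "c \<le> length s" "u = q @ fg_inv (take c s)" "v = q @ drop c s"
      by (rule tau_fibre_decompose)
    then show "(u, v) \<in> (\<lambda>(q, c). (q @ fg_inv (take c s), q @ drop c s)) ` (ball1 X ?r \<times> {..length s})"
      by force
  qed
  then have "card (tau_fibre X n s) \<le> card (ball1 X ?r \<times> {..length s})"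
    using finite_ball1[OF assms] by (meson card_image_le card_mono finite_SigmaI finite_atMost
        finite_imageI order_trans)
  then show ?thesis
    by (simp add: card_cartesian_product mult.commute)
qed

lemma card_tau_fibre_le_sqrt_power:
  assumes "finite X" "2 \<le> card X" "s \<in> ball1 X n"
  shows "card (tau_fibre X n s) \<le> 3 * real (n + 1) * sqrt (real (2 * card X - 1)) ^ (n - length s)"
proof -
  let ?g = "2 * card X - 1" and ?r = "(n - length s) div 2"
  have "length s + 1 \<le> n + 1"
    using assms(3) by (simp add: ball1_def)
  then have "card (tau_fibre X n s) \<le> (n + 1) * (3 * ?g ^ ?r)"
    using card_tau_fibre_le[OF assms(1), of n s] card_ball1_le[OF assms(1,2), of ?r]
    by (meson le_trans mult_le_mono)
  then have "card (tau_fibre X n s) \<le> real ((n + 1) * (3 * ?g ^ ?r))"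
    by (simp only: of_nat_le_iff)
  also have "\<dots> = 3 * real (n + 1) * sqrt (real ?g) ^ (2 * ?r)"
    by (simp add: power_mult algebra_simps)
  also have "\<dots> \<le> 3 * real (n + 1) * sqrt (real ?g) ^ (n - length s)"
    using assms(2) by (intro mult_left_mono power_increasing) auto
  finally show ?thesis .
qed

section \<open>Densities\<close>

definition density :: "(nat \<Rightarrow> 'b set) \<Rightarrow> 'b set \<Rightarrow> nat \<Rightarrow> real" where
  "density B S n = real (card (S \<inter> B n)) / real (card (B n))"

lemma density_nonneg: "0 \<le> density B S n"
  by (simp add: density_def)

lemma density_mono:
  assumes "A \<subseteq> A'"
  shows "density B A n \<le> density B A' n"
proof (cases "finite (B n)")
  case True
  then have "card (A \<inter> B n) \<le> card (A' \<inter> B n)"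
    using assms by (intro card_mono) auto
  then show ?thesis
    by (simp add: density_def divide_right_mono)
qed (simp add: density_def)

lemma density_ball1_free_group: "finite X \<Longrightarrow> density (ball1 X) (free_group_elems X) n = 1"
proof -
  assume "finite X"
  have "free_group_elems X \<inter> ball1 X n = ball1 X n"
    by (auto simp: ball1_def)
  then show ?thesis
    using card_ball1_pos[OF \<open>finite X\<close>, of n] by (simp add: density_def)
qed

lemma card_inter_ball1_eq_density:
  "finite X \<Longrightarrow> card (S \<inter> ball1 X n) = density (ball1 X) S n * card (ball1 X n)"
  using card_ball1_pos[of X n] by (simp add: density_def)

lemma sum_by_length_le:
  fixes h :: "nat \<Rightarrow> real"
  assumes "finite X" "\<And>j. 0 \<le> h j"
  shows "(\<Sum>s\<in>S \<inter> ball1 X n. h (length s)) \<le> (\<Sum>j\<le>n. card (S \<inter> ball1 X j) * h j)"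
proof -
  have "(\<Sum>s\<in>S \<inter> ball1 X n. h (length s))
      = (\<Sum>j\<le>n. \<Sum>s\<in>{s \<in> S \<inter> ball1 X n. length s = j}. h (length s))"
    using finite_ball1[OF assms(1)] by (intro sum.group[symmetric]) (auto simp: ball1_def)
  also have "\<dots> = (\<Sum>j\<le>n. card {s \<in> S \<inter> ball1 X n. length s = j} * h j)"
    by (intro sum.cong refl) simp
  also have "\<dots> \<le> (\<Sum>j\<le>n. card (S \<inter> ball1 X j) * h j)"
    using finite_ball1[OF assms(1)] assms(2)
    by (intro sum_mono mult_right_mono) (auto intro!: card_mono simp: ball1_def)
  finally show ?thesis .
qed

lemma card_tau_preimage_ge:
  assumes "finite X" "X \<noteq> {}"
  shows "real (n + 1) / 2 * card (ball1 X n) * density (ball1 X) S n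
    \<le> card (tau_preimage X S \<inter> ball2 X n)"
proof -
  have "real (n + 1) / 2 \<le> card (tau_fibre X n s)" if "s \<in> ball1 X n" for s
  proof -
    have "n + 1 \<le> 2 * ((n - length s) div 2 + length s + 1)"
      by presburger
    then have "real (n + 1) \<le> real (2 * card (tau_fibre X n s))"
      using card_tau_fibre_ge[OF assms that] by (simp only: of_nat_le_iff)
    then show ?thesis
      by simp
  qed
  then have "(\<Sum>s\<in>S \<inter> ball1 X n. real (n + 1) / 2) \<le> (\<Sum>s\<in>S \<inter> ball1 X n. real (card (tau_fibre X n s)))"
    by (intro sum_mono) auto
  then show ?thesis
    by (simp add: card_tau_preimage_inter_ball2[OF assms(1)] card_inter_ball1_eq_density[OF assms(1)]
        mult_ac)
qed

lemma card_ball2_ge: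
  assumes "finite X" "X \<noteq> {}"
  shows "real (n + 1) / 2 * card (ball1 X n) \<le> card (ball2 X n)"
proof -
  have "tau_preimage X (free_group_elems X) \<inter> ball2 X n = ball2 X n"
    by (auto simp: tau_preimage_free_group ball2_def)
  then show ?thesis
    using card_tau_preimage_ge[OF assms, of n "free_group_elems X"]
    by (simp add: density_ball1_free_group[OF assms(1)])
qed

lemma card_tau_preimage_le_card_eq_1:
  assumes "finite X" "card X = 1"
  shows "card (tau_preimage X S \<inter> ball2 X n)
    \<le> 4 * (real (n + 1) / 2 * card (ball1 X n)) * density (ball1 X) S n"
proof -
  have "card (tau_preimage X S \<inter> ball2 X n) \<le> (\<Sum>s\<in>S \<inter> ball1 X n. card (ball1 X n))"
    unfolding card_tau_preimage_inter_ball2[OF assms(1)]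
    by (intro sum_mono card_tau_fibre_le_card_ball1 assms(1))
  also have "\<dots> \<le> 2 * (n + 1) * card (S \<inter> ball1 X n)"
    by (simp add: card_ball1_card_eq_1 assms)
  finally have "card (tau_preimage X S \<inter> ball2 X n) \<le> real (2 * (n + 1) * card (S \<inter> ball1 X n))"
    by (simp only: of_nat_le_iff)
  then show ?thesis
    by (simp add: card_inter_ball1_eq_density[OF assms(1)] algebra_simps)
qed

lemma card_inter_ball1_le:
  assumes "finite X" "2 \<le> card X"
  shows "card (S \<inter> ball1 X j) \<le> density (ball1 X) S j * (3 * real (2 * card X - 1) ^ j)"
proof -
  have "real (card (ball1 X j)) \<le> real (3 * (2 * card X - 1) ^ j)"
    by (simp only: of_nat_le_iff card_ball1_le[OF assms])
  then show ?thesis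
    using density_nonneg[of "ball1 X" S j]
    by (simp add: card_inter_ball1_eq_density[OF assms(1)] mult_left_mono)
qed

lemma card_tau_preimage_le_convolution:
  assumes "finite X" "2 \<le> card X"
  defines "\<gamma> \<equiv> sqrt (real (2 * card X - 1))"
  shows "card (tau_preimage X S \<inter> ball2 X n)
    \<le> 18 * (real (n + 1) / 2 * card (ball1 X n)) * (\<Sum>j\<le>n. (1 / \<gamma>) ^ (n - j) * density (ball1 X) S j)"
proof -
  have \<gamma>: "1 \<le> \<gamma>" "\<gamma> ^ 2 = real (2 * card X - 1)"
    using assms(2) by (simp_all add: \<gamma>_def)
  have \<gamma>_pow: "\<gamma> ^ (2 * j) = real (2 * card X - 1) ^ j" for j
    using \<gamma>(2) by (simp add: power_mult)
  have "card (tau_preimage X S \<inter> ball2 X n) = (\<Sum>s\<in>S \<inter> ball1 X n. real (card (tau_fibre X n s)))"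
    by (simp add: card_tau_preimage_inter_ball2[OF assms(1)])
  also have "\<dots> \<le> (\<Sum>s\<in>S \<inter> ball1 X n. 3 * real (n + 1) * \<gamma> ^ (n - length s))"
    using card_tau_fibre_le_sqrt_power[OF assms(1,2)] by (intro sum_mono) (simp add: \<gamma>_def)
  also have "\<dots> \<le> (\<Sum>j\<le>n. card (S \<inter> ball1 X j) * (3 * real (n + 1) * \<gamma> ^ (n - j)))"
    using \<gamma> by (intro sum_by_length_le assms(1)) simp
  also have "\<dots> \<le> (\<Sum>j\<le>n. density (ball1 X) S j * (3 * \<gamma> ^ (2 * j)) * (3 * real (n + 1) * \<gamma> ^ (n - j)))"
    using card_inter_ball1_le[OF assms(1,2)] \<gamma>(1) by (intro sum_mono mult_right_mono) (simp_all add: \<gamma>_pow)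
  also have "\<dots> = (\<Sum>j\<le>n. 9 * real (n + 1) * \<gamma> ^ (2 * n) * ((1 / \<gamma>) ^ (n - j) * density (ball1 X) S j))"
  proof (intro sum.cong refl)
    fix j
    assume "j \<in> {..n}"
    then have "\<gamma> ^ (2 * n) = \<gamma> ^ (2 * j) * \<gamma> ^ (n - j) * \<gamma> ^ (n - j)"
      by (simp add: mult_2 flip: power_add)
    then have key: "\<gamma> ^ (2 * j) * \<gamma> ^ (n - j) = \<gamma> ^ (2 * n) * (1 / \<gamma>) ^ (n - j)"
      using \<gamma>(1) by (simp add: power_one_over)
    have "density (ball1 X) S j * (3 * \<gamma> ^ (2 * j)) * (3 * real (n + 1) * \<gamma> ^ (n - j))
        = 9 * real (n + 1) * density (ball1 X) S j * (\<gamma> ^ (2 * j) * \<gamma> ^ (n - j))"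
      by (simp only: mult_ac)
    also have "\<dots> = 9 * real (n + 1) * \<gamma> ^ (2 * n) * ((1 / \<gamma>) ^ (n - j) * density (ball1 X) S j)"
      unfolding key by (simp only: mult_ac)
    finally show "density (ball1 X) S j * (3 * \<gamma> ^ (2 * j)) * (3 * real (n + 1) * \<gamma> ^ (n - j))
        = 9 * real (n + 1) * \<gamma> ^ (2 * n) * ((1 / \<gamma>) ^ (n - j) * density (ball1 X) S j)" .
  qed
  also have "\<dots> = 9 * real (n + 1) * \<gamma> ^ (2 * n) * (\<Sum>j\<le>n. (1 / \<gamma>) ^ (n - j) * density (ball1 X) S j)"
    by (simp only: sum_distrib_left)
  also have "\<dots> \<le> 9 * real (n + 1) * card (ball1 X n) * (\<Sum>j\<le>n. (1 / \<gamma>) ^ (n - j) * density (ball1 X) S j)"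
  proof (intro mult_right_mono mult_left_mono)
    have "real ((2 * card X - 1) ^ n) \<le> card (ball1 X n)"
      by (simp only: of_nat_le_iff card_ball1_ge[OF assms(1)])
    then show "\<gamma> ^ (2 * n) \<le> card (ball1 X n)"
      by (simp add: \<gamma>_pow)
  qed (use \<gamma>(1) in \<open>simp_all add: sum_nonneg density_nonneg\<close>)
  finally show ?thesis
    by (simp add: algebra_simps)
qed

lemma sum_zero_power_diff: "(\<Sum>j\<le>n. 0 ^ (n - j) * a j) = (a n :: real)"
  by (subst sum.remove[of _ n]) (auto intro!: sum.neutral simp: power_0_left)

lemma card_tau_preimage_le_geometric:
  assumes "finite X" "X \<noteq> {}"
  obtains c \<rho> :: real where "0 \<le> c" "0 \<le> \<rho>" "\<rho> < 1"
    "\<And>S n. card (tau_preimage X S \<inter> ball2 X n)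
      \<le> c * (real (n + 1) / 2 * card (ball1 X n)) * (\<Sum>j\<le>n. \<rho> ^ (n - j) * density (ball1 X) S j)"
proof (cases "card X = 1")
  case True
  show ?thesis
  proof (rule that[of 4 0])
    fix S n
    show "card (tau_preimage X S \<inter> ball2 X n)
      \<le> 4 * (real (n + 1) / 2 * card (ball1 X n)) * (\<Sum>j\<le>n. 0 ^ (n - j) * density (ball1 X) S j)"
      unfolding sum_zero_power_diff by (rule card_tau_preimage_le_card_eq_1[OF assms(1) True])
  qed simp_all
next
  case False
  moreover have "card X \<noteq> 0"
    using assms by simp
  ultimately have card_X: "2 \<le> card X"
    by linarith
  show ?thesis
  proof (rule that[of 18 "1 / sqrt (real (2 * card X - 1))"])
    show "1 / sqrt (real (2 * card X - 1)) < 1"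
      using card_X by simp
    fix S n
    show "card (tau_preimage X S \<inter> ball2 X n) \<le> 18 * (real (n + 1) / 2 * card (ball1 X n))
      * (\<Sum>j\<le>n. (1 / sqrt (real (2 * card X - 1))) ^ (n - j) * density (ball1 X) S j)"
      by (rule card_tau_preimage_le_convolution[OF assms(1) card_X])
  qed simp_all
qed

lemma geometric_sum_le:
  fixes \<rho> :: real
  assumes "0 \<le> \<rho>" "\<rho> < 1"
  shows "(\<Sum>j\<le>n. \<rho> ^ (n - j)) \<le> 1 / (1 - \<rho>)"
proof -
  have "(\<Sum>j\<le>n. \<rho> ^ (n - j)) = (\<Sum>j\<le>n. \<rho> ^ j)"
    by (rule sum.reindex_bij_witness[of _ "\<lambda>j. n - j" "\<lambda>j. n - j"]) auto
  also have "\<dots> = (\<Sum>j<Suc n. \<rho> ^ j)"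
    by (simp only: lessThan_Suc_atMost)
  also have "\<dots> = (1 - \<rho> ^ Suc n) / (1 - \<rho>)"
    using assms by (subst sum_gp_strict) simp
  also have "\<dots> \<le> 1 / (1 - \<rho>)"
    using assms by (intro divide_right_mono) auto
  finally show ?thesis .
qed

lemma density_tau_preimage_empty:
  assumes "X = {}"
  shows "density (ball2 X) (tau_preimage X S) n = density (ball1 X) S n"
proof -
  have F: "free_group_elems X = {[]}"
  proof (intro equalityI subsetI)
    fix w
    assume "w \<in> free_group_elems X"
    then show "w \<in> {[]}"
      using assms by (simp add: free_group_elems_def)
  qed (simp add: free_group_elems_def)
  have ball1: "ball1 X n = {[]}"
    by (auto simp: ball1_def F)
  have ball2: "ball2 X n = {([], [])}"
    by (auto simp: ball2_def F)
  have "tau ([], []) = ([] :: 'a word)"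
    by (simp add: tau_def fg_mult_def)
  then have "tau_preimage X S \<inter> ball2 X n = (if [] \<in> S then {([], [])} else {})"
    by (auto simp: tau_preimage_def ball2 F)
  moreover have "S \<inter> ball1 X n = (if [] \<in> S then {[]} else {})"
    by (auto simp: ball1)
  ultimately show ?thesis
    by (simp add: density_def ball1 ball2)
qed

lemma density_comparison_nonempty:
  assumes "finite X" "X \<noteq> {}"
  obtains \<rho> C :: real where "0 \<le> \<rho>" "\<rho> < 1"
    "\<And>S n. density (ball1 X) S n \<le> C * density (ball2 X) (tau_preimage X S) n"
    "\<And>S n. density (ball2 X) (tau_preimage X S) n
      \<le> C * (\<Sum>j\<le>n. \<rho> ^ (n - j) * density (ball1 X) S j)"
proof -
  obtain c \<rho> where c: "0 \<le> c" and \<rho>: "0 \<le> \<rho>" "\<rho> < 1" and upper: "\<And>S n. card (tau_preimage X S \<inter> ball2 X n)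
      \<le> c * (real (n + 1) / 2 * card (ball1 X n)) * (\<Sum>j\<le>n. \<rho> ^ (n - j) * density (ball1 X) S j)"
    using card_tau_preimage_le_geometric[OF assms] by blast
  define C where "C = c / (1 - \<rho>)"
  show ?thesis
  proof (rule that[OF \<rho>])
    fix S n
    define m where "m = real (n + 1) / 2 * card (ball1 X n)"
    define D where "D = (\<Sum>j\<le>n. \<rho> ^ (n - j) * density (ball1 X) S j)"
    define P where "P = real (card (tau_preimage X S \<inter> ball2 X n))"
    define T where "T = real (card (ball2 X n))"
    have m: "0 < m"
      using card_ball1_pos[OF assms(1)] by (simp add: m_def)
    have m_le_T: "m \<le> T"
      using card_ball2_ge[OF assms] by (simp add: m_def T_def)
    have "T \<le> c * m * (\<Sum>j\<le>n. \<rho> ^ (n - j))"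
      using upper[of "free_group_elems X" n]
      by (simp add: T_def m_def tau_preimage_free_group density_ball1_free_group[OF assms(1)] Int_absorb1
          ball2_def subset_eq)
    also have "\<dots> \<le> C * m"
      using mult_left_mono[OF geometric_sum_le[OF \<rho>, of n], of "c * m"] c m by (simp add: C_def)
    finally have T_le: "T \<le> C * m" .
    have "density (ball1 X) S n \<le> P / m"
      using card_tau_preimage_ge[OF assms, of n S] m by (simp add: m_def P_def field_simps)
    also have "\<dots> \<le> C * (P / T)"
    proof -
      have "P * T \<le> P * (C * m)"
        using T_le by (rule mult_left_mono) (simp add: P_def)
      then show ?thesis
        using m m_le_T by (simp add: field_simps)
    qed
    finally show "density (ball1 X) S n \<le> C * density (ball2 X) (tau_preimage X S) n"
      by (simp add: density_def P_def T_def)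
    have "P / T \<le> P / m"
      using m_le_T m by (intro divide_left_mono) (simp_all add: P_def)
    also have "\<dots> \<le> c * D"
      using upper[of S n] m by (simp add: P_def m_def D_def field_simps)
    also have "\<dots> \<le> C * D"
    proof (rule mult_right_mono)
      show "c \<le> C"
        using c \<rho> by (simp add: C_def le_divide_eq mult_left_le)
      show "0 \<le> D"
        using \<rho> by (simp add: D_def sum_nonneg density_nonneg)
    qed
    finally show "density (ball2 X) (tau_preimage X S) n \<le> C * D"
      by (simp add: density_def P_def T_def)
  qed
qed

lemma density_comparison:
  assumes "finite X"
  obtains \<rho> C :: real where "0 \<le> \<rho>" "\<rho> < 1"
    "\<And>S n. density (ball1 X) S n \<le> C * density (ball2 X) (tau_preimage X S) n"
    "\<And>S n. density (ball2 X) (tau_preimage X S) n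
      \<le> C * (\<Sum>j\<le>n. \<rho> ^ (n - j) * density (ball1 X) S j)"
proof (cases "X = {}")
  case True
  show ?thesis
  proof (rule that[of 0 1])
    fix S n
    show "density (ball1 X) S n \<le> 1 * density (ball2 X) (tau_preimage X S) n"
      by (simp add: density_tau_preimage_empty[OF True])
    show "density (ball2 X) (tau_preimage X S) n \<le> 1 * (\<Sum>j\<le>n. 0 ^ (n - j) * density (ball1 X) S j)"
      by (simp add: density_tau_preimage_empty[OF True] sum_zero_power_diff)
  qed simp_all
next
  case False
  show ?thesis
    by (rule density_comparison_nonempty[OF assms False]) (rule that)
qed

section \<open>Convolution with a geometric kernel\<close>

lemma tendsto_zero_if_norm_le_mult:
  fixes f g :: "nat \<Rightarrow> real"
  assumes "\<And>n. norm (f n) \<le> C * g n" and "g \<longlonglongrightarrow> 0"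
  shows "f \<longlonglongrightarrow> 0"
proof -
  have "\<forall>n. norm (f n) \<le> C * g n"
    using assms(1) by blast
  moreover have "(\<lambda>n. C * g n) \<longlonglongrightarrow> 0"
    using assms(2) by (rule tendsto_mult_right_zero)
  ultimately show ?thesis
    by (rule Lim_null_comparison[OF always_eventually])
qed

lemma tendsto_geometric_convolution_zero:
  fixes a :: "nat \<Rightarrow> real"
  assumes lim: "a \<longlonglongrightarrow> 0" and \<rho>: "0 \<le> \<rho>" "\<rho> < 1"
  shows "(\<lambda>n. \<Sum>j\<le>n. \<rho> ^ (n - j) * a j) \<longlonglongrightarrow> 0"
proof -
  have "Bseq a"
    using lim by (intro convergent_imp_Bseq convergentI)
  then obtain M where M: "0 < M" "\<And>n. norm (a n) \<le> M"
    by (rule BseqE) blast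
  define f where "f k n = (if k \<le> n then \<rho> ^ k * a (n - k) else 0)" for k n
  have sum_eq: "(\<Sum>j\<le>n. \<rho> ^ (n - j) * a j) = (\<Sum>k. f k n)" for n
  proof -
    have "(\<Sum>k. f k n) = (\<Sum>k\<le>n. f k n)"
      by (rule suminf_finite) (auto simp: f_def)
    also have "\<dots> = (\<Sum>k\<le>n. \<rho> ^ k * a (n - k))"
      by (rule sum.cong) (auto simp: f_def)
    also have "\<dots> = (\<Sum>j\<le>n. \<rho> ^ (n - j) * a j)"
      by (rule sum.reindex_bij_witness[of _ "\<lambda>j. n - j" "\<lambda>k. n - k"]) auto
    finally show ?thesis
      by simp
  qed
  have lim_f: "(\<lambda>n. f k n) \<longlonglongrightarrow> 0" for k
  proof -
    have "(\<lambda>n. \<rho> ^ k * a (n - k)) \<longlonglongrightarrow> 0"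
      by (intro tendsto_mult_right_zero filterlim_compose[OF lim filterlim_minus_const_nat_at_top])
    moreover have "eventually (\<lambda>n. \<rho> ^ k * a (n - k) = f k n) sequentially"
      using eventually_ge_at_top[of k] by eventually_elim (simp add: f_def)
    ultimately show ?thesis
      by (rule Lim_transform_eventually)
  qed
  have bound: "eventually (\<lambda>(k, n). norm (f k n) \<le> M * \<rho> ^ k) (at_top \<times>\<^sub>F sequentially)"
  proof (rule always_eventually, clarify)
    fix k n
    have "\<rho> ^ k * \<bar>a (n - k)\<bar> \<le> \<rho> ^ k * M"
      using M(2)[of "n - k"] \<rho> by (intro mult_left_mono) auto
    then show "norm (f k n) \<le> M * \<rho> ^ k"
      using \<rho> M(1) by (simp add: f_def abs_mult mult.commute)
  qed
  have "summable (\<lambda>k. M * \<rho> ^ k)"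
    using \<rho> by (intro summable_mult summable_geometric) auto
  from tannerys_theorem[OF lim_f bound this] have "(\<lambda>n. \<Sum>k. f k n) \<longlonglongrightarrow> (\<Sum>k. 0 :: real)"
    by simp
  then show ?thesis
    by (simp add: sum_eq)
qed

lemma geometric_convolution_exp_decay:
  fixes a :: "nat \<Rightarrow> real"
  assumes \<beta>: "1 < \<beta>" and lim: "(\<lambda>n. \<beta> ^ n * a n) \<longlonglongrightarrow> 0" and \<rho>: "0 \<le> \<rho>" "\<rho> < 1"
  shows "\<exists>\<beta>'>1. (\<lambda>n. \<beta>' ^ n * (\<Sum>j\<le>n. \<rho> ^ (n - j) * a j)) \<longlonglongrightarrow> 0"
proof -
  define b where "b = min \<beta> (2 / (1 + \<rho>))"
  have b: "1 < b" "b \<le> \<beta>"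
    using \<beta> \<rho> by (simp_all add: b_def field_simps)
  have "\<rho> * b \<le> \<rho> * (2 / (1 + \<rho>))"
    using \<rho> by (intro mult_left_mono) (auto simp: b_def)
  also have "\<dots> < 1"
    using \<rho> by (simp add: field_simps)
  finally have \<rho>b: "\<rho> * b < 1" .
  have "norm (b ^ n * a n) \<le> 1 * norm (\<beta> ^ n * a n)" for n
    using b by (simp add: abs_mult mult_right_mono power_mono)
  then have "(\<lambda>n. b ^ n * a n) \<longlonglongrightarrow> 0"
    using tendsto_norm_zero[OF lim] by (rule tendsto_zero_if_norm_le_mult)
  then have "(\<lambda>n. \<Sum>j\<le>n. (\<rho> * b) ^ (n - j) * (b ^ j * a j)) \<longlonglongrightarrow> 0"
    using \<rho> b \<rho>b by (intro tendsto_geometric_convolution_zero) auto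
  moreover have "(\<Sum>j\<le>n. (\<rho> * b) ^ (n - j) * (b ^ j * a j)) = b ^ n * (\<Sum>j\<le>n. \<rho> ^ (n - j) * a j)" for n
  proof -
    have "(\<rho> * b) ^ (n - j) * (b ^ j * a j) = b ^ n * (\<rho> ^ (n - j) * a j)" if "j \<in> {..n}" for j
      using that by (simp add: power_mult_distrib mult_ac flip: power_add)
    then have "(\<Sum>j\<le>n. (\<rho> * b) ^ (n - j) * (b ^ j * a j)) = (\<Sum>j\<le>n. b ^ n * (\<rho> ^ (n - j) * a j))"
      by (rule sum.cong[OF refl])
    then show ?thesis
      by (simp add: sum_distrib_left)
  qed
  ultimately show ?thesis
    using b(1) by auto
qed

lemma tendsto_zero_iff_of_convolution_bounds:
  fixes a b :: "nat \<Rightarrow> real"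
  assumes "\<And>n. 0 \<le> a n" "\<And>n. 0 \<le> b n"
    and "\<And>n. a n \<le> C * b n" "\<And>n. b n \<le> C * (\<Sum>j\<le>n. \<rho> ^ (n - j) * a j)"
    and \<rho>: "0 \<le> \<rho>" "\<rho> < 1"
  shows "a \<longlonglongrightarrow> 0 \<longleftrightarrow> b \<longlonglongrightarrow> 0"
proof
  assume "b \<longlonglongrightarrow> 0"
  have "norm (a n) \<le> C * b n" for n
    using assms(1,3) by simp
  then show "a \<longlonglongrightarrow> 0"
    using \<open>b \<longlonglongrightarrow> 0\<close> by (rule tendsto_zero_if_norm_le_mult)
next
  assume "a \<longlonglongrightarrow> 0"
  have "norm (b n) \<le> C * (\<Sum>j\<le>n. \<rho> ^ (n - j) * a j)" for n
    using assms(2,4) by simp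
  moreover have "(\<lambda>n. \<Sum>j\<le>n. \<rho> ^ (n - j) * a j) \<longlonglongrightarrow> 0"
    using \<open>a \<longlonglongrightarrow> 0\<close> \<rho> by (rule tendsto_geometric_convolution_zero)
  ultimately show "b \<longlonglongrightarrow> 0"
    by (rule tendsto_zero_if_norm_le_mult)
qed

lemma exp_decay_iff_of_convolution_bounds:
  fixes a b :: "nat \<Rightarrow> real"
  assumes "\<And>n. 0 \<le> a n" "\<And>n. 0 \<le> b n"
    and "\<And>n. a n \<le> C * b n" "\<And>n. b n \<le> C * (\<Sum>j\<le>n. \<rho> ^ (n - j) * a j)"
    and \<rho>: "0 \<le> \<rho>" "\<rho> < 1"
  shows "(\<exists>\<beta>>1. (\<lambda>n. \<beta> ^ n * a n) \<longlonglongrightarrow> 0) \<longleftrightarrow> (\<exists>\<beta>>1. (\<lambda>n. \<beta> ^ n * b n) \<longlonglongrightarrow> 0)"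
proof
  assume "\<exists>\<beta>>1. (\<lambda>n. \<beta> ^ n * b n) \<longlonglongrightarrow> 0"
  then obtain \<beta> where \<beta>: "1 < \<beta>" "(\<lambda>n. \<beta> ^ n * b n) \<longlonglongrightarrow> 0"
    by blast
  have "norm (\<beta> ^ n * a n) \<le> C * (\<beta> ^ n * b n)" for n
    using mult_left_mono[OF assms(3), of "\<beta> ^ n" n] assms(1) \<beta>(1) by (simp add: mult_ac)
  then have "(\<lambda>n. \<beta> ^ n * a n) \<longlonglongrightarrow> 0"
    using \<beta>(2) by (rule tendsto_zero_if_norm_le_mult)
  with \<beta>(1) show "\<exists>\<beta>>1. (\<lambda>n. \<beta> ^ n * a n) \<longlonglongrightarrow> 0"
    by blast
next
  assume "\<exists>\<beta>>1. (\<lambda>n. \<beta> ^ n * a n) \<longlonglongrightarrow> 0"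
  then obtain \<beta> where \<beta>: "1 < \<beta>" "(\<lambda>n. \<beta> ^ n * (\<Sum>j\<le>n. \<rho> ^ (n - j) * a j)) \<longlonglongrightarrow> 0"
    using geometric_convolution_exp_decay[OF _ _ \<rho>] by blast
  have "norm (\<beta> ^ n * b n) \<le> C * (\<beta> ^ n * (\<Sum>j\<le>n. \<rho> ^ (n - j) * a j))" for n
    using mult_left_mono[OF assms(4), of "\<beta> ^ n" n] assms(2) \<beta>(1) by (simp add: mult_ac)
  then have "(\<lambda>n. \<beta> ^ n * b n) \<longlonglongrightarrow> 0"
    using \<beta>(2) by (rule tendsto_zero_if_norm_le_mult)
  with \<beta>(1) show "\<exists>\<beta>>1. (\<lambda>n. \<beta> ^ n * b n) \<longlonglongrightarrow> 0"
    by blast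
qed

section \<open>Negligibility\<close>

lemma negligible_iff_density: "negligible B S \<longleftrightarrow> density B S \<longlonglongrightarrow> 0"
  by (simp add: negligible_def density_def[abs_def])

lemma exp_negligible_iff_density:
  "exp_negligible B S \<longleftrightarrow> (\<exists>\<beta>>1. (\<lambda>n. \<beta> ^ n * density B S n) \<longlonglongrightarrow> 0)"
  by (simp add: exp_negligible_def density_def)

lemma negligible_subset:
  assumes "A \<subseteq> A'" "negligible B A'"
  shows "negligible B A"
proof -
  have "norm (density B A n) \<le> 1 * density B A' n" for n
    using density_mono[OF assms(1)] by (simp add: density_nonneg)
  then show ?thesis
    using assms(2) unfolding negligible_iff_density by (rule tendsto_zero_if_norm_le_mult)
qed

lemma exp_negligible_subset:
  assumes "A \<subseteq> A'" "exp_negligible B A'"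
  shows "exp_negligible B A"
proof -
  obtain \<beta> where \<beta>: "1 < \<beta>" "(\<lambda>n. \<beta> ^ n * density B A' n) \<longlonglongrightarrow> 0"
    using assms(2) unfolding exp_negligible_iff_density by blast
  have "norm (\<beta> ^ n * density B A n) \<le> 1 * (\<beta> ^ n * density B A' n)" for n
    using density_mono[OF assms(1)] \<beta>(1) by (simp add: density_nonneg mult_left_mono)
  then have "(\<lambda>n. \<beta> ^ n * density B A n) \<longlonglongrightarrow> 0"
    using \<beta>(2) by (rule tendsto_zero_if_norm_le_mult)
  with \<beta>(1) show ?thesis
    unfolding exp_negligible_iff_density by blast
qed

lemma negligible_tau_preimage_iff:
  assumes "finite X"
  shows "negligible (ball1 X) S \<longleftrightarrow> negligible (ball2 X) (tau_preimage X S)"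
    and "exp_negligible (ball1 X) S \<longleftrightarrow> exp_negligible (ball2 X) (tau_preimage X S)"
proof -
  obtain \<rho> C :: real where \<rho>: "0 \<le> \<rho>" "\<rho> < 1"
    and le1: "\<And>S n. density (ball1 X) S n \<le> C * density (ball2 X) (tau_preimage X S) n"
    and le2: "\<And>S n. density (ball2 X) (tau_preimage X S) n
      \<le> C * (\<Sum>j\<le>n. \<rho> ^ (n - j) * density (ball1 X) S j)"
    by (rule density_comparison[OF assms]) (rule that)
  show "negligible (ball1 X) S \<longleftrightarrow> negligible (ball2 X) (tau_preimage X S)"
    unfolding negligible_iff_density
    by (rule tendsto_zero_iff_of_convolution_bounds[OF density_nonneg density_nonneg le1 le2 \<rho>])
  show "exp_negligible (ball1 X) S \<longleftrightarrow> exp_negligible (ball2 X) (tau_preimage X S)"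
    unfolding exp_negligible_iff_density
    by (rule exp_decay_iff_of_convolution_bounds[OF density_nonneg density_nonneg le1 le2 \<rho>])
qed

theorem lemma3p5:
  fixes X :: "'a set" and S :: "'a word set" and T :: "('a word \<times> 'a word) set"
  assumes "finite X"
    and "S \<subseteq> free_group_elems X"
    and "T \<subseteq> free_group_elems X \<times> free_group_elems X"
  defines "F \<equiv> free_group_elems X"
    and "F2 \<equiv> free_group_elems X \<times> free_group_elems X"
    and "pre \<equiv> {p \<in> free_group_elems X \<times> free_group_elems X. tau p \<in> S}"
  shows "(negligible (ball1 X) S \<longleftrightarrow> negligible (ball2 X) pre)
       \<and> (exp_negligible (ball1 X) S \<longleftrightarrow> exp_negligible (ball2 X) pre)
       \<and> (generic F (ball1 X) S \<longleftrightarrow> generic F2 (ball2 X) pre)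
       \<and> (exp_generic F (ball1 X) S \<longleftrightarrow> exp_generic F2 (ball2 X) pre)
       \<and> (generic F2 (ball2 X) T \<longrightarrow> generic F (ball1 X) (tau ` T))
       \<and> (exp_generic F2 (ball2 X) T \<longrightarrow> exp_generic F (ball1 X) (tau ` T))
       \<and> (negligible (ball1 X) (tau ` T) \<longrightarrow> negligible (ball2 X) T)
       \<and> (exp_negligible (ball1 X) (tau ` T) \<longrightarrow> exp_negligible (ball2 X) T)"
proof -
  note iff = negligible_tau_preimage_iff[OF assms(1)]
  have pre: "pre = tau_preimage X S"
    by (simp add: pre_def tau_preimage_def)
  have complement: "F2 - tau_preimage X S' = tau_preimage X (F - S')" for S'
    using tau_in_free_group by (auto simp: tau_preimage_def F_def F2_def)
  have image_complement: "tau_preimage X (F - tau ` T) \<subseteq> F2 - T"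
    by (auto simp: tau_preimage_def F2_def)
  have image: "T \<subseteq> tau_preimage X (tau ` T)"
    using assms(3) by (auto simp: tau_preimage_def)
  have "negligible (ball1 X) S \<longleftrightarrow> negligible (ball2 X) pre"
    and "exp_negligible (ball1 X) S \<longleftrightarrow> exp_negligible (ball2 X) pre"
    using iff[of S] by (simp_all add: pre)
  moreover have "generic F (ball1 X) S \<longleftrightarrow> generic F2 (ball2 X) pre"
    and "exp_generic F (ball1 X) S \<longleftrightarrow> exp_generic F2 (ball2 X) pre"
    using iff[of "F - S"] by (simp_all add: generic_def exp_generic_def pre complement)
  moreover have "generic F2 (ball2 X) T \<longrightarrow> generic F (ball1 X) (tau ` T)"
    and "exp_generic F2 (ball2 X) T \<longrightarrow> exp_generic F (ball1 X) (tau ` T)"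
    using iff[of "F - tau ` T"] negligible_subset[OF image_complement]
      exp_negligible_subset[OF image_complement]
    by (simp_all add: generic_def exp_generic_def)
  moreover have "negligible (ball1 X) (tau ` T) \<longrightarrow> negligible (ball2 X) T"
    and "exp_negligible (ball1 X) (tau ` T) \<longrightarrow> exp_negligible (ball2 X) T"
    using iff[of "tau ` T"] negligible_subset[OF image] exp_negligible_subset[OF image]
    by simp_all
  ultimately show ?thesis
    by blast
qed

end
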